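(* Let $\pi\in(0,1)$, $\eta\in\mathcal{P}(\mathbb{R})$ and $y\in\mathbb{R}$. Define $\mathrm{KL}^L_{\inf}(\eta,y)=\inf\{\mathrm{KL}(\eta,\kappa):\kappa\in\mathcal{P}(\mathbb{R}),\ x_\pi(\kappa)\le y\}$ and $\mathrm{KL}^U_{\inf}(\eta,y)=\inf\{\mathrm{KL}(\eta,\kappa):\kappa\in\mathcal{P}(\mathbb{R}),\ x_\pi(\kappa)\ge y\}$. Then \[\mathrm{KL}^L_{\inf}(\eta,y)=d_2(\min\{F_\eta(y),\pi\},\pi)\quad\text{and}\quad\mathrm{KL}^U_{\inf}(\eta,y)=d_2(\max\{F^-_\eta(y),\pi\},\pi).\]
   Context: $F_\eta(y)=\eta((-\infty,y])$ and $F^-_\eta(y)=\lim_{z\uparrow y}F_\eta(z)$. $x_\pi(\kappa)=\min\{z:F_\kappa(z)\ge\pi\}$ is the value-at-risk. $\mathrm{KL}(\eta,\kappa)=\int\log\frac{d\eta}{d\kappa}d\eta$ if $\eta\ll\kappa$, else $+\infty$. $d_2(r,q)=r\log\frac rq+(1-r)\log\frac{1-r}{1-q}$ is the KL divergence between Bernoulli$(r)$ and Bernoulli$(q)$ (with $0\log0=0$). *)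

theory Defs
  imports "HOL-Probability.Probability"
begin

definition prob_real :: "real measure \<Rightarrow> bool" where
  "prob_real \<eta> \<longleftrightarrow> prob_space \<eta> \<and> sets \<eta> = sets borel"

definition cdf_of :: "real measure \<Rightarrow> real \<Rightarrow> real" where
  "cdf_of \<eta> y = measure \<eta> {..y}"

definition cdf_left :: "real measure \<Rightarrow> real \<Rightarrow> real" where
  "cdf_left \<eta> y = Lim (at_left y) (cdf_of \<eta>)"

definition VaR :: "real \<Rightarrow> real measure \<Rightarrow> real" where
  "VaR p \<kappa> = (LEAST z. cdf_of \<kappa> z \<ge> p)"

definition KL :: "real measure \<Rightarrow> real measure \<Rightarrow> ereal" where
  "KL \<eta> \<kappa> =
     (if absolutely_continuous \<kappa> \<eta> then
        enn2ereal (\<integral>\<^sup>+ x. ennreal (max 0 (ln (enn2real (RN_deriv \<kappa> \<eta> x)))) \<partial>\<eta>)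
      - enn2ereal (\<integral>\<^sup>+ x. ennreal (max 0 (- ln (enn2real (RN_deriv \<kappa> \<eta> x)))) \<partial>\<eta>)
      else \<infinity>)"

text \<open>Bernoulli KL divergence with the convention 0 log 0 = 0.\<close>
definition d2 :: "real \<Rightarrow> real \<Rightarrow> real" where
  "d2 r q = (if r = 0 then 0 else r * ln (r / q))
          + (if r = 1 then 0 else (1 - r) * ln ((1 - r) / (1 - q)))"

definition KLinf_L :: "real \<Rightarrow> real measure \<Rightarrow> real \<Rightarrow> ereal" where
  "KLinf_L p \<eta> y = Inf {KL \<eta> \<kappa> | \<kappa>. prob_real \<kappa> \<and> VaR p \<kappa> \<le> y}"

definition KLinf_U :: "real \<Rightarrow> real measure \<Rightarrow> real \<Rightarrow> ereal" where
  "KLinf_U p \<eta> y = Inf {KL \<eta> \<kappa> | \<kappa>. prob_real \<kappa> \<and> VaR p \<kappa> \<ge> y}"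

end

theory Submission
  imports Defs
begin

(* Lower bounds: testing ln (d eta / d kappa) >= 1 + ln c - c (d kappa / d eta) with a function c
   that is constant on a Borel set A and on its complement gives KL(eta, kappa) >= d2(eta A, p)
   whenever eta A and kappa A lie on opposite sides of p.  Since x_p(kappa) <= y iff
   F_kappa(y) >= p, this applies with A = (-inf, y] to the lower and with A = (-inf, y) to the
   upper problem.  Upper bounds: rescaling eta by constants on A and on its complement, adding an
   atom outside the support of eta where needed, moves the mass of A to any q in (0, 1) at cost
   exactly d2(eta A, q).  For the upper problem only q < p is admissible, and q -> p gives the
   infimum. *)

lemma real_distribution_if_prob_real: "prob_real M \<Longrightarrow> real_distribution M"
  unfolding prob_real_def real_distribution_def real_distribution_axioms_def by auto

lemma cdf_of_eq_cdf: "prob_real M \<Longrightarrow> cdf_of M = cdf M"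
  by (auto simp: cdf_of_def cdf_def2 fun_eq_iff)

lemma cdf_left_eq_measure_lessThan:
  assumes "prob_real M"
  shows "cdf_left M y = measure M {..<y}"
proof -
  interpret real_distribution M
    using real_distribution_if_prob_real[OF assms] .
  show ?thesis
    unfolding cdf_left_def cdf_of_eq_cdf[OF assms]
    by (rule tendsto_Lim[OF trivial_limit_at_left_real cdf_at_left])
qed

lemma VaR_le_iff:
  assumes K: "prob_real \<kappa>" and p: "0 < p" "p < 1"
  shows "VaR p \<kappa> \<le> z \<longleftrightarrow> p \<le> cdf_of \<kappa> z"
proof -
  interpret real_distribution \<kappa>
    using real_distribution_if_prob_real[OF K] .
  define S where "S = {z. p \<le> cdf \<kappa> z}"
  have up: "x \<in> S" if "s \<in> S" "s \<le> x" for s x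
    using that cdf_nondecreasing[of s x] unfolding S_def by auto
  have "eventually (\<lambda>z. p < cdf \<kappa> z) at_top"
    using order_tendstoD(1)[OF cdf_lim_at_top_prob] p by simp
  then obtain s where s: "s \<in> S"
    unfolding S_def eventually_at_top_linorder by (meson less_imp_le mem_Collect_eq order_refl)
  have "eventually (\<lambda>z. cdf \<kappa> z < p) at_bot"
    using order_tendstoD(2)[OF cdf_lim_at_bot] p by simp
  then have bdd: "bdd_below S"
    unfolding S_def eventually_at_bot_linorder bdd_below_def
    by (metis linorder_le_cases mem_Collect_eq not_le)
  define m where "m = Inf S"
  have least: "m \<le> z" if "z \<in> S" for z
    unfolding m_def using that bdd by (rule cInf_lower)
  \<comment> \<open>right continuity makes the infimum a minimum\<close>
  have "eventually (\<lambda>z. p \<le> cdf \<kappa> z) (at_right m)"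
    unfolding eventually_at_right_field
  proof (intro exI[of _ "m + 1"] conjI allI impI)
    fix z assume "m < z" "z < m + 1"
    then obtain t where "t \<in> S" "t < z"
      using s unfolding m_def by (metis cInf_lessD empty_iff)
    then show "p \<le> cdf \<kappa> z" using up[of t z] unfolding S_def by simp
  qed simp
  then have "m \<in> S"
    using tendsto_lowerbound[OF cdf_is_right_cont[of m, unfolded continuous_within]]
    unfolding S_def by simp
  then have "VaR p \<kappa> = m"
    unfolding VaR_def cdf_of_eq_cdf[OF K] using least by (intro Least_equality) (auto simp: S_def)
  then show ?thesis
    using \<open>m \<in> S\<close> up[of m z] least[of z] unfolding S_def cdf_of_eq_cdf[OF K] by auto
qed

lemma le_VaR_iff:
  assumes "prob_real \<kappa>" "0 < p" "p < 1"
  shows "y \<le> VaR p \<kappa> \<longleftrightarrow> (\<forall>t<y. cdf_of \<kappa> t < p)"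
  using VaR_le_iff[OF assms] by (meson le_less_trans linorder_not_le order_refl)

lemma d2_eq: "d2 r q = r * ln (r / q) + (1 - r) * ln ((1 - r) / (1 - q))"
  by (simp add: d2_def)

lemma d2_self [simp]: "d2 r r = 0"
  by (simp add: d2_eq)

lemma isCont_d2:
  assumes "0 < q" "q < 1"
  shows "isCont (d2 r) q"
  unfolding d2_def using assms by (cases "r = 0"; cases "r = 1") (simp_all add: continuous_intros)

lemma max_zero_diff_max_zero_neg: "max 0 t - max 0 (- t) = (t::real)"
  by auto

lemma nn_integral_two_valued:
  assumes M: "prob_space M" and A[measurable]: "A \<in> sets M" and "0 \<le> \<alpha>" "0 \<le> \<beta>"
    and h: "AE x in M. h x = (if x \<in> A then \<alpha> else \<beta>)"
  shows "(\<integral>\<^sup>+x. ennreal (h x) \<partial>M) = ennreal (\<alpha> * measure M A + \<beta> * (1 - measure M A))"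
proof -
  interpret prob_space M by (fact M)
  have "AE x in M. ennreal (h x) = ennreal \<alpha> * indicator A x + ennreal \<beta> * indicator (space M - A) x"
    using h AE_space by eventually_elim (auto split: split_indicator)
  then have "(\<integral>\<^sup>+x. ennreal (h x) \<partial>M)
      = (\<integral>\<^sup>+x. ennreal \<alpha> * indicator A x + ennreal \<beta> * indicator (space M - A) x \<partial>M)"
    by (rule nn_integral_cong_AE)
  also have "\<dots> = ennreal \<alpha> * emeasure M A + ennreal \<beta> * emeasure M (space M - A)"
    by (simp add: nn_integral_add nn_integral_cmult_indicator)
  also have "\<dots> = ennreal (\<alpha> * measure M A + \<beta> * (1 - measure M A))"
    using assms by (simp add: emeasure_eq_measure prob_compl ennreal_mult)
  finally show ?thesis .
qed

lemma nn_integral_divide_RN_deriv_le: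
  assumes K: "sigma_finite_measure \<kappa>" and ac: "absolutely_continuous \<kappa> \<eta>"
    and sets: "sets \<eta> = sets \<kappa>" and g[measurable]: "g \<in> borel_measurable \<kappa>" and "\<And>x. 0 \<le> g x"
  shows "(\<integral>\<^sup>+x. ennreal (g x / enn2real (RN_deriv \<kappa> \<eta> x)) \<partial>\<eta>) \<le> (\<integral>\<^sup>+x. ennreal (g x) \<partial>\<kappa>)"
proof -
  have "(\<integral>\<^sup>+x. ennreal (g x / enn2real (RN_deriv \<kappa> \<eta> x)) \<partial>\<eta>)
      = (\<integral>\<^sup>+x. RN_deriv \<kappa> \<eta> x * ennreal (g x / enn2real (RN_deriv \<kappa> \<eta> x)) \<partial>\<kappa>)"
    by (subst sigma_finite_measure.density_RN_deriv[OF K ac sets, symmetric])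
       (simp add: nn_integral_density)
  also have "\<dots> \<le> (\<integral>\<^sup>+x. ennreal (g x) \<partial>\<kappa>)"
  proof (rule nn_integral_mono)
    fix x
    show "RN_deriv \<kappa> \<eta> x * ennreal (g x / enn2real (RN_deriv \<kappa> \<eta> x)) \<le> ennreal (g x)"
      using \<open>0 \<le> g x\<close>
      by (cases "RN_deriv \<kappa> \<eta> x" rule: ennreal_cases)
         (auto simp: ennreal_mult''[symmetric] ennreal_leI)
  qed
  finally show ?thesis .
qed

lemma AE_RN_deriv_pos:
  assumes K: "sigma_finite_measure \<kappa>" and E: "sigma_finite_measure \<eta>"
    and ac: "absolutely_continuous \<kappa> \<eta>" and sets: "sets \<eta> = sets \<kappa>"
  shows "AE x in \<eta>. 0 < enn2real (RN_deriv \<kappa> \<eta> x)"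
proof -
  have "AE x in \<kappa>. RN_deriv \<kappa> \<eta> x \<noteq> \<infinity>"
    by (rule sigma_finite_measure.RN_deriv_finite[OF K E ac sets])
  then have finite: "AE x in \<eta>. RN_deriv \<kappa> \<eta> x \<noteq> \<infinity>"
    by (rule absolutely_continuous_AE[OF sets ac])
  have "AE x in density \<kappa> (RN_deriv \<kappa> \<eta>). 0 < RN_deriv \<kappa> \<eta> x"
    by (subst AE_density) auto
  then have "AE x in \<eta>. 0 < RN_deriv \<kappa> \<eta> x"
    by (simp only: sigma_finite_measure.density_RN_deriv[OF K ac sets])
  with finite show ?thesis
    by eventually_elim (auto simp: enn2real_positive_iff top.not_eq_extremum)
qed

lemma ln_ge_tangent:
  fixes F c :: real
  assumes "0 < F" "0 < c"
  shows "1 + ln c - c / F \<le> ln F"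
  using ln_le_minus_one[of "c / F"] assms by (simp add: ln_div)

lemma nn_integral_neg_ln_RN_deriv_le_1:
  assumes E: "prob_real \<eta>" and K: "prob_real \<kappa>" and ac: "absolutely_continuous \<kappa> \<eta>"
  shows "(\<integral>\<^sup>+x. ennreal (max 0 (- ln (enn2real (RN_deriv \<kappa> \<eta> x)))) \<partial>\<eta>) \<le> 1"
proof -
  interpret K: real_distribution \<kappa> using real_distribution_if_prob_real[OF K] .
  interpret E: real_distribution \<eta> using real_distribution_if_prob_real[OF E] .
  have "(\<integral>\<^sup>+x. ennreal (max 0 (- ln (enn2real (RN_deriv \<kappa> \<eta> x)))) \<partial>\<eta>)
      \<le> (\<integral>\<^sup>+x. ennreal (1 / enn2real (RN_deriv \<kappa> \<eta> x)) \<partial>\<eta>)"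
    using AE_RN_deriv_pos[OF K.sigma_finite_measure_axioms E.sigma_finite_measure_axioms ac]
    by (intro nn_integral_mono_AE) (auto elim!: eventually_mono intro!: ennreal_leI
        dest: ln_ge_tangent[where c = 1])
  also have "\<dots> \<le> (\<integral>\<^sup>+x. ennreal 1 \<partial>\<kappa>)"
    by (rule nn_integral_divide_RN_deriv_le[OF K.sigma_finite_measure_axioms ac]) auto
  finally show ?thesis using K.emeasure_space_1 by simp
qed

lemma ennreal_le_imp_ereal_diff_ge:
  fixes N P :: ennreal and x y s :: real
  assumes le: "N + ennreal x \<le> P + ennreal s + ennreal y" and "N \<noteq> \<top>"
    and "0 \<le> x" "0 \<le> y" "0 \<le> s"
  shows "ereal (x - y - s) \<le> enn2ereal P - enn2ereal N"
proof (cases P rule: ennreal_cases)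
  case (real r)
  obtain n where n: "N = ennreal n" "0 \<le> n"
    using \<open>N \<noteq> \<top>\<close> by (cases N rule: ennreal_cases) auto
  have "ennreal (n + x) \<le> ennreal (r + s + y)"
    using le assms real n by (simp add: ennreal_plus[symmetric] del: ennreal_plus)
  then have "n + x \<le> r + s + y"
    using assms real n by (subst (asm) ennreal_le_iff) auto
  then show ?thesis using real n by simp
qed (use \<open>N \<noteq> \<top>\<close> in \<open>cases N rule: ennreal_cases, auto\<close>)

lemma KL_parts_ge_test_function:
  assumes E: "prob_real \<eta>" and K: "prob_real \<kappa>" and ac: "absolutely_continuous \<kappa> \<eta>"
    and C[measurable]: "C \<in> borel_measurable borel" and "\<And>x. 0 \<le> C x" and C_pos: "AE x in \<eta>. 0 < C x"
  shows "(\<integral>\<^sup>+x. ennreal (max 0 (- ln (enn2real (RN_deriv \<kappa> \<eta> x)))) \<partial>\<eta>)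
      + (\<integral>\<^sup>+x. ennreal (max 0 (1 + ln (C x))) \<partial>\<eta>)
    \<le> (\<integral>\<^sup>+x. ennreal (max 0 (ln (enn2real (RN_deriv \<kappa> \<eta> x)))) \<partial>\<eta>)
      + (\<integral>\<^sup>+x. ennreal (C x) \<partial>\<kappa>) + (\<integral>\<^sup>+x. ennreal (max 0 (- (1 + ln (C x)))) \<partial>\<eta>)"
proof -
  interpret K: real_distribution \<kappa> using real_distribution_if_prob_real[OF K] .
  interpret E: real_distribution \<eta> using real_distribution_if_prob_real[OF E] .
  define F where "F x = enn2real (RN_deriv \<kappa> \<eta> x)" for x
  have F[measurable]: "F \<in> borel_measurable borel"
    using borel_measurable_RN_deriv[of \<kappa> \<eta>] unfolding F_def by simp
  have "AE x in \<eta>. 0 < F x"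
    unfolding F_def
    by (rule AE_RN_deriv_pos[OF K.sigma_finite_measure_axioms E.sigma_finite_measure_axioms ac]) simp
  \<comment> \<open>KL is a difference of possibly infinite integrals, so the tangent inequality
     is integrated in positive and negative parts\<close>
  then have "AE x in \<eta>. ennreal (max 0 (- ln (F x))) + ennreal (max 0 (1 + ln (C x)))
      \<le> ennreal (max 0 (ln (F x))) + ennreal (C x / F x) + ennreal (max 0 (- (1 + ln (C x))))"
    using C_pos
  proof eventually_elim
    case (elim x)
    then have "1 + ln (C x) - C x / F x \<le> ln (F x)" "0 \<le> C x / F x"
      by (simp_all add: ln_ge_tangent)
    then show ?case
      by (simp add: ennreal_plus[symmetric] ennreal_leI max_def del: ennreal_plus)
  qed
  then have "(\<integral>\<^sup>+x. ennreal (max 0 (- ln (F x))) \<partial>\<eta>) + (\<integral>\<^sup>+x. ennreal (max 0 (1 + ln (C x))) \<partial>\<eta>)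
      \<le> (\<integral>\<^sup>+x. ennreal (max 0 (ln (F x))) \<partial>\<eta>) + (\<integral>\<^sup>+x. ennreal (C x / F x) \<partial>\<eta>)
        + (\<integral>\<^sup>+x. ennreal (max 0 (- (1 + ln (C x)))) \<partial>\<eta>)"
    by (simp add: nn_integral_add[symmetric] nn_integral_mono_AE)
  also have "(\<integral>\<^sup>+x. ennreal (C x / F x) \<partial>\<eta>) \<le> (\<integral>\<^sup>+x. ennreal (C x) \<partial>\<kappa>)"
    unfolding F_def using \<open>\<And>x. 0 \<le> C x\<close>
    by (intro nn_integral_divide_RN_deriv_le[OF K.sigma_finite_measure_axioms ac]) auto
  finally show ?thesis
    unfolding F_def by (simp add: add_mono add_right_mono)
qed

lemma KL_ge_two_valued:
  assumes E: "prob_real \<eta>" and K: "prob_real \<kappa>" and A[measurable]: "A \<in> sets borel"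
    and c: "0 \<le> c" "0 \<le> c'" "c = 0 \<Longrightarrow> measure \<eta> A = 0" "c' = 0 \<Longrightarrow> measure \<eta> A = 1"
  shows "ereal (measure \<eta> A * (1 + ln c) + (1 - measure \<eta> A) * (1 + ln c')
            - c * measure \<kappa> A - c' * (1 - measure \<kappa> A)) \<le> KL \<eta> \<kappa>"
proof (cases "absolutely_continuous \<kappa> \<eta>")
  case False
  then show ?thesis by (simp add: KL_def)
next
  case ac: True
  interpret K: real_distribution \<kappa> using real_distribution_if_prob_real[OF K] .
  interpret E: real_distribution \<eta> using real_distribution_if_prob_real[OF E] .
  define a where "a = measure \<eta> A"
  define b where "b = measure \<kappa> A"
  define C where "C x = (if x \<in> A then c else c')" for x
  define P where "P = (\<integral>\<^sup>+x. ennreal (max 0 (ln (enn2real (RN_deriv \<kappa> \<eta> x)))) \<partial>\<eta>)"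
  define N where "N = (\<integral>\<^sup>+x. ennreal (max 0 (- ln (enn2real (RN_deriv \<kappa> \<eta> x)))) \<partial>\<eta>)"
  have "AE x in \<eta>. x \<in> A \<longrightarrow> 0 < c"
    using c E.prob_eq_0[of A] by (cases "c = 0") auto
  moreover have "AE x in \<eta>. x \<notin> A \<longrightarrow> 0 < c'"
    using c E.AE_prob_1[of A] by (cases "c' = 0") auto
  ultimately have "AE x in \<eta>. 0 < C x"
    by eventually_elim (use c in \<open>auto simp: C_def\<close>)
  then have "N + (\<integral>\<^sup>+x. ennreal (max 0 (1 + ln (C x))) \<partial>\<eta>)
      \<le> P + (\<integral>\<^sup>+x. ennreal (C x) \<partial>\<kappa>) + (\<integral>\<^sup>+x. ennreal (max 0 (- (1 + ln (C x)))) \<partial>\<eta>)"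
    unfolding P_def N_def using c by (intro KL_parts_ge_test_function[OF E K ac]) (auto simp: C_def)
  also have "(\<integral>\<^sup>+x. ennreal (C x) \<partial>\<kappa>) = ennreal (c * b + c' * (1 - b))"
    unfolding b_def by (rule nn_integral_two_valued[OF K.prob_space_axioms]) (use c in \<open>auto simp: C_def\<close>)
  also have "(\<integral>\<^sup>+x. ennreal (max 0 (1 + ln (C x))) \<partial>\<eta>)
      = ennreal (max 0 (1 + ln c) * a + max 0 (1 + ln c') * (1 - a))"
    unfolding a_def by (rule nn_integral_two_valued[OF E.prob_space_axioms]) (auto simp: C_def)
  also have "(\<integral>\<^sup>+x. ennreal (max 0 (- (1 + ln (C x)))) \<partial>\<eta>)
      = ennreal (max 0 (- (1 + ln c)) * a + max 0 (- (1 + ln c')) * (1 - a))"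
    unfolding a_def by (rule nn_integral_two_valued[OF E.prob_space_axioms]) (auto simp: C_def)
  finally have "ereal (max 0 (1 + ln c) * a + max 0 (1 + ln c') * (1 - a)
      - (max 0 (- (1 + ln c)) * a + max 0 (- (1 + ln c')) * (1 - a)) - (c * b + c' * (1 - b)))
      \<le> enn2ereal P - enn2ereal N"
  proof (rule ennreal_le_imp_ereal_diff_ge)
    show "N \<noteq> \<top>"
      using nn_integral_neg_ln_RN_deriv_le_1[OF E K ac] unfolding N_def by (auto simp: top_unique)
    have "0 \<le> a" "a \<le> 1" "0 \<le> b" "b \<le> 1"
      unfolding a_def b_def by auto
    then show "0 \<le> max 0 (1 + ln c) * a + max 0 (1 + ln c') * (1 - a)"
      "0 \<le> max 0 (- (1 + ln c)) * a + max 0 (- (1 + ln c')) * (1 - a)" "0 \<le> c * b + c' * (1 - b)"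
      using c by auto
  qed
  also have "enn2ereal P - enn2ereal N = KL \<eta> \<kappa>"
    using ac unfolding KL_def P_def N_def by simp
  finally show ?thesis
    unfolding a_def b_def
    using max_zero_diff_max_zero_neg[of "1 + ln c"] max_zero_diff_max_zero_neg[of "1 + ln c'"]
    by (simp add: algebra_simps)
qed

lemma KL_nonneg:
  assumes "prob_real \<eta>" "prob_real \<kappa>"
  shows "0 \<le> KL \<eta> \<kappa>"
  using KL_ge_two_valued[OF assms, of UNIV 1 1] by (simp add: zero_ereal_def)

lemma d2_le_KL:
  assumes E: "prob_real \<eta>" and K: "prob_real \<kappa>" and A: "A \<in> sets borel"
    and p: "0 < p" "p < 1" and sep: "(measure \<kappa> A - p) * (measure \<eta> A - p) \<le> 0"
  shows "ereal (d2 (measure \<eta> A) p) \<le> KL \<eta> \<kappa>"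
proof -
  define a where "a = measure \<eta> A"
  define b where "b = measure \<kappa> A"
  have a: "0 \<le> a" "a \<le> 1"
    using prob_space.prob_le_1 E unfolding a_def prob_real_def by auto
  define t where "t = a / p * b + (1 - a) / (1 - p) * (1 - b)"
  have "t = 1 + (b - p) * (a - p) / (p * (1 - p))"
    unfolding t_def using p by (simp add: field_simps)
  moreover have "(b - p) * (a - p) / (p * (1 - p)) \<le> 0"
    using sep p unfolding a_def b_def by (intro divide_nonpos_pos) auto
  moreover have "a * (1 + ln (a / p)) + (1 - a) * (1 + ln ((1 - a) / (1 - p)))
      - a / p * b - (1 - a) / (1 - p) * (1 - b) = d2 a p + 1 - t"
    unfolding t_def d2_eq by (simp add: algebra_simps)
  ultimately have "ereal (d2 a p) \<le> ereal (a * (1 + ln (a / p)) + (1 - a) * (1 + ln ((1 - a) / (1 - p)))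
      - a / p * b - (1 - a) / (1 - p) * (1 - b))"
    by simp
  \<comment> \<open>the test function c = a / p, c' = (1 - a) / (1 - p) is optimal when b = p\<close>
  also have "\<dots> \<le> KL \<eta> \<kappa>"
    using a p unfolding a_def b_def by (intro KL_ge_two_valued[OF E K A]) auto
  finally show ?thesis
    unfolding a_def .
qed

lemma KL_eq_two_valued:
  assumes E: "prob_real \<eta>" and ac: "absolutely_continuous \<kappa> \<eta>" and A: "A \<in> sets borel"
    and "0 < r" "0 < s" and RN: "AE x in \<eta>. RN_deriv \<kappa> \<eta> x = ennreal (if x \<in> A then r else s)"
  shows "KL \<eta> \<kappa> = ereal (measure \<eta> A * ln r + (1 - measure \<eta> A) * ln s)"
proof -
  interpret E: real_distribution \<eta> using real_distribution_if_prob_real[OF E] .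
  define a where "a = measure \<eta> A"
  have a: "0 \<le> a" "a \<le> 1" unfolding a_def by auto
  have "(\<integral>\<^sup>+x. ennreal (max 0 (\<sigma> * ln (enn2real (RN_deriv \<kappa> \<eta> x)))) \<partial>\<eta>)
      = ennreal (max 0 (\<sigma> * ln r) * a + max 0 (\<sigma> * ln s) * (1 - a))" for \<sigma> :: real
    unfolding a_def using A RN \<open>0 < r\<close> \<open>0 < s\<close>
    by (intro nn_integral_two_valued[OF E.prob_space_axioms]) (auto elim!: eventually_mono)
  from this[of 1] this[of "- 1"] have "KL \<eta> \<kappa>
      = ereal (max 0 (ln r) * a + max 0 (ln s) * (1 - a)) - ereal (max 0 (- ln r) * a + max 0 (- ln s) * (1 - a))"
    using ac a by (simp add: KL_def del: ennreal_plus)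
  then show ?thesis
    unfolding a_def[symmetric]
    using max_zero_diff_max_zero_neg[of "ln r"] max_zero_diff_max_zero_neg[of "ln s"]
    by (simp add: algebra_simps)
qed

lemma KL_self:
  assumes E: "prob_real \<eta>"
  shows "KL \<eta> \<eta> = 0"
proof -
  interpret E: real_distribution \<eta> using real_distribution_if_prob_real[OF E] .
  have "AE x in \<eta>. 1 = RN_deriv \<eta> \<eta> x"
    by (rule E.RN_deriv_unique) (simp_all add: density_1)
  moreover have "absolutely_continuous \<eta> \<eta>"
    by (simp add: absolutely_continuous_def)
  ultimately show ?thesis
    using KL_eq_two_valued[OF E, of \<eta> UNIV 1 1]
    by (auto elim!: eventually_mono)
qed

definition add_measure :: "'a measure \<Rightarrow> 'a measure \<Rightarrow> 'a measure" where
  "add_measure M N = measure_of (space M) (sets M) (\<lambda>S. emeasure M S + emeasure N S)"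

lemma sets_add_measure [simp, measurable_cong]: "sets (add_measure M N) = sets M"
  unfolding add_measure_def by (simp add: sets_measure_of sets.space_closed)

lemma space_add_measure [simp]: "space (add_measure M N) = space M"
  unfolding add_measure_def by (simp add: space_measure_of_conv)

lemma emeasure_add_measure:
  assumes N: "sets N = sets M" and S: "S \<in> sets M"
  shows "emeasure (add_measure M N) S = emeasure M S + emeasure N S"
  unfolding add_measure_def
proof (rule emeasure_measure_of_sigma[OF sets.sigma_algebra_axioms _ _ S])
  show "positive (sets M) (\<lambda>S. emeasure M S + emeasure N S)"
    unfolding positive_def by simp
  show "countably_additive (sets M) (\<lambda>S. emeasure M S + emeasure N S)"
    unfolding countably_additive_def
  proof (intro allI impI)
    fix A :: "nat \<Rightarrow> 'a set"
    assume A: "range A \<subseteq> sets M" "disjoint_family A"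
    then have "range A \<subseteq> sets N" using N by simp
    then show "(\<Sum>i. emeasure M (A i) + emeasure N (A i)) = emeasure M (\<Union>i. A i) + emeasure N (\<Union>i. A i)"
      using A by (simp add: suminf_add[symmetric] suminf_emeasure)
  qed
qed

lemma exists_measure_singleton_eq_0:
  assumes "prob_real \<eta>"
  obtains z where "measure \<eta> {z} = 0"
proof -
  interpret real_distribution \<eta> using real_distribution_if_prob_real[OF assms] .
  have "\<not> countable (UNIV :: real set)"
    by (rule uncountable_UNIV_real)
  then obtain z where "\<not> 0 < measure \<eta> {z}"
    using countable_atoms countable_subset[of UNIV "{x. 0 < measure \<eta> {x}}"] by blast
  then show ?thesis using that measure_nonneg[of \<eta> "{z}"] by simp
qed

definition tilted :: "real measure \<Rightarrow> real set \<Rightarrow> real \<Rightarrow> real \<Rightarrow> real \<Rightarrow> real \<Rightarrow> real measure" where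
  "tilted \<eta> A u v w z = add_measure (density \<eta> (\<lambda>x. ennreal (if x \<in> A then u else v)))
     (scale_measure (ennreal w) (return borel z))"

lemma sets_tilted [simp, measurable_cong]: "sets (tilted \<eta> A u v w z) = sets \<eta>"
  by (simp add: tilted_def)

lemma space_tilted [simp]: "space (tilted \<eta> A u v w z) = space \<eta>"
  by (simp add: tilted_def space_density)

context
  fixes \<eta> :: "real measure" and A :: "real set" and u v w z :: real
  assumes E: "prob_real \<eta>" and A[measurable]: "A \<in> sets borel" and uvw: "0 \<le> u" "0 \<le> v" "0 \<le> w"
begin

lemma emeasure_tilted:
  assumes S[measurable]: "S \<in> sets borel"
  shows "emeasure (tilted \<eta> A u v w z) S
    = ennreal (u * measure \<eta> (S \<inter> A) + v * measure \<eta> (S - A) + w * indicator S z)"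
proof -
  interpret E: real_distribution \<eta> using real_distribution_if_prob_real[OF E] .
  have "emeasure (density \<eta> (\<lambda>x. ennreal (if x \<in> A then u else v))) S
      = (\<integral>\<^sup>+x. ennreal u * indicator (S \<inter> A) x + ennreal v * indicator (S - A) x \<partial>\<eta>)"
    by (subst emeasure_density) (auto intro!: nn_integral_cong split: split_indicator)
  also have "\<dots> = ennreal (u * measure \<eta> (S \<inter> A) + v * measure \<eta> (S - A))"
    using uvw by (simp add: nn_integral_add nn_integral_cmult_indicator E.emeasure_eq_measure ennreal_mult)
  finally show ?thesis
    unfolding tilted_def using uvw
    by (simp add: emeasure_add_measure ennreal_mult ennreal_plus[symmetric] split: split_indicator
        del: ennreal_plus)
qed

lemma measure_tilted:
  assumes "S \<in> sets borel"
  shows "measure (tilted \<eta> A u v w z) S = u * measure \<eta> (S \<inter> A) + v * measure \<eta> (S - A) + w * indicator S z"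
  using uvw by (simp add: measure_def[of "tilted \<eta> A u v w z"] emeasure_tilted[OF assms] del: ennreal_plus)

lemma prob_real_tilted:
  assumes "u * measure \<eta> A + v * (1 - measure \<eta> A) + w = 1"
  shows "prob_real (tilted \<eta> A u v w z)"
proof -
  interpret E: real_distribution \<eta> using real_distribution_if_prob_real[OF E] .
  have "prob_space (tilted \<eta> A u v w z)"
    using emeasure_tilted[of UNIV] assms E.prob_compl[of A] by (intro prob_spaceI) simp
  then show ?thesis
    unfolding prob_real_def by simp
qed

lemma measure_tilted_subset:
  assumes "S \<in> sets borel" "S \<subseteq> A"
  shows "measure (tilted \<eta> A u v w z) S = u * measure \<eta> S + w * indicator S z"
  using assms by (simp add: measure_tilted Int_absorb2 Diff_eq_empty_iff[THEN iffD2])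

lemma density_tilted:
  assumes total: "u * measure \<eta> A + v * (1 - measure \<eta> A) + w = 1"
    and uv: "0 < u" "0 < v" and z_null: "{z} \<in> null_sets \<eta>"
  shows "density (tilted \<eta> A u v w z) (\<lambda>x. ennreal (if x = z then 0 else if x \<in> A then 1 / u else 1 / v)) = \<eta>"
    (is "density ?\<kappa> ?f = \<eta>")
proof (rule measure_eqI)
  interpret E: real_distribution \<eta> using real_distribution_if_prob_real[OF E] .
  interpret K: real_distribution ?\<kappa>
    using real_distribution_if_prob_real[OF prob_real_tilted[OF total]] .
  have emeasure_minus_z: "emeasure ?\<kappa> (S - {z}) = ennreal (u * measure \<eta> (S \<inter> A) + v * measure \<eta> (S - A))"
    if "S \<in> sets borel" for S
  proof -
    have "S - {z} - A = (S - A) - {z}" "(S - {z}) \<inter> A = (S \<inter> A) - {z}"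
      by auto
    then show ?thesis
      using that by (simp add: emeasure_tilted measure_Diff_null_set[OF _ z_null])
  qed
  fix S assume "S \<in> sets (density ?\<kappa> ?f)"
  then have S[measurable]: "S \<in> sets borel" by simp
  have disjoint: "S \<inter> A - A = {}" "(S - A) \<inter> A = {}"
    by auto
  \<comment> \<open>the atom at z is \<eta>-null, so the density may vanish there\<close>
  have "emeasure (density ?\<kappa> ?f) S
      = (\<integral>\<^sup>+x. ennreal (1 / u) * indicator (S \<inter> A - {z}) x + ennreal (1 / v) * indicator (S - A - {z}) x \<partial>?\<kappa>)"
    by (subst emeasure_density) (auto intro!: nn_integral_cong split: split_indicator)
  also have "\<dots> = ennreal (1 / u) * emeasure ?\<kappa> (S \<inter> A - {z}) + ennreal (1 / v) * emeasure ?\<kappa> (S - A - {z})"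
    by (simp add: nn_integral_add nn_integral_cmult_indicator)
  also have "\<dots> = emeasure \<eta> (S \<inter> A) + emeasure \<eta> (S - A)"
    using emeasure_minus_z[of "S \<inter> A"] emeasure_minus_z[of "S - A"] uv disjoint
    by (simp add: ennreal_mult[symmetric] E.emeasure_eq_measure del: ennreal_mult)
  also have "\<dots> = emeasure \<eta> S"
    by (subst plus_emeasure) (auto simp: Int_Diff_Un)
  finally show "emeasure (density ?\<kappa> ?f) S = emeasure \<eta> S" .
qed simp

lemma KL_tilted:
  assumes total: "u * measure \<eta> A + v * (1 - measure \<eta> A) + w = 1"
    and uv: "0 < u" "0 < v" and z: "measure \<eta> {z} = 0"
  shows "KL \<eta> (tilted \<eta> A u v w z) = ereal (- (measure \<eta> A * ln u + (1 - measure \<eta> A) * ln v))"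
proof -
  define \<kappa> where "\<kappa> = tilted \<eta> A u v w z"
  define f where "f x = ennreal (if x = z then 0 else if x \<in> A then 1 / u else 1 / v)" for x
  interpret E: real_distribution \<eta> using real_distribution_if_prob_real[OF E] .
  interpret K: real_distribution \<kappa>
    using real_distribution_if_prob_real[OF prob_real_tilted[OF total]] unfolding \<kappa>_def .
  have z_null: "{z} \<in> null_sets \<eta>"
    using z by (simp add: E.emeasure_eq_measure null_sets_def)
  have f: "f \<in> borel_measurable \<kappa>"
    unfolding f_def by measurable
  have density: "density \<kappa> f = \<eta>"
    unfolding \<kappa>_def f_def using density_tilted[OF total uv z_null] .
  then have ac: "absolutely_continuous \<kappa> \<eta>"
    using absolutely_continuousI_density[OF f] by simp
  have "AE x in \<eta>. f x = RN_deriv \<kappa> \<eta> x"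
    by (rule absolutely_continuous_AE[OF _ ac K.RN_deriv_unique[OF f density]]) (simp add: \<kappa>_def)
  then have "AE x in \<eta>. RN_deriv \<kappa> \<eta> x = ennreal (if x \<in> A then 1 / u else 1 / v)"
    using AE_not_in[OF z_null] by eventually_elim (auto simp: f_def)
  then have "KL \<eta> \<kappa> = ereal (measure \<eta> A * ln (1 / u) + (1 - measure \<eta> A) * ln (1 / v))"
    using uv by (intro KL_eq_two_valued[OF E ac A]) auto
  then show ?thesis
    unfolding \<kappa>_def using uv by (simp add: ln_div)
qed

end

lemma exists_KL_eq_d2:
  assumes E: "prob_real \<eta>" and A[measurable]: "A \<in> sets borel" and q: "0 < q" "q < 1"
    and z: "measure \<eta> A = 0 \<Longrightarrow> z \<in> A" "measure \<eta> A = 1 \<Longrightarrow> z \<notin> A"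
  obtains \<kappa> where "prob_real \<kappa>" "KL \<eta> \<kappa> = ereal (d2 (measure \<eta> A) q)" "measure \<kappa> A = q"
    "\<And>S. S \<in> sets borel \<Longrightarrow> S \<subseteq> A \<Longrightarrow> z \<notin> S \<Longrightarrow> measure \<kappa> S \<le> q"
proof -
  note witness = that
  interpret E: real_distribution \<eta> using real_distribution_if_prob_real[OF E] .
  define a where "a = measure \<eta> A"
  have a: "0 \<le> a" "a \<le> 1"
    unfolding a_def by auto
  have tilt: thesis
    if uvw: "0 < u" "0 < v" "0 \<le> w" and total: "u * a + v * (1 - a) + w = 1"
      and z': "measure \<eta> {z'} = 0" "w = 0 \<or> z' = z" and mass: "u * a + w * indicator A z' = q"
      and KL: "- (a * ln u + (1 - a) * ln v) = d2 a q"
    for u v w z'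
  proof (rule witness[of "tilted \<eta> A u v w z'"])
    show "prob_real (tilted \<eta> A u v w z')"
      using total uvw unfolding a_def by (intro prob_real_tilted[OF E A]) auto
    show "KL \<eta> (tilted \<eta> A u v w z') = ereal (d2 (measure \<eta> A) q)"
      using KL_tilted[OF E A _ _ _ total[unfolded a_def]] uvw z' KL unfolding a_def by simp
    show "measure (tilted \<eta> A u v w z') A = q"
      using mass uvw unfolding a_def by (simp add: measure_tilted[OF E A])
    fix S assume S: "S \<in> sets borel" "S \<subseteq> A" "z \<notin> S"
    have "measure (tilted \<eta> A u v w z') S = u * measure \<eta> S"
      using S z'(2) uvw by (auto simp: measure_tilted_subset[OF E A])
    also have "\<dots> \<le> u * a"
      using S uvw E.finite_measure_mono[of S A] unfolding a_def by simp
    also have "\<dots> \<le> q"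
      using mass mult_nonneg_nonneg[OF uvw(3) indicator_pos_le[of A z']] by linarith
    finally show "measure (tilted \<eta> A u v w z') S \<le> q" .
  qed
  consider "a = 0" | "a = 1" | "0 < a" "a < 1"
    using a by linarith
  then show ?thesis
  proof cases
    case 1
    \<comment> \<open>\<eta> has no mass on A, so the mass q on A is an atom at z\<close>
    have "measure \<eta> {z} \<le> a"
      using z(1) 1 unfolding a_def by (intro E.finite_measure_mono) auto
    then show ?thesis
      using 1 z(1) q by (intro tilt[of 1 "1 - q" q z]) (auto simp: a_def d2_eq ln_div measure_le_0_iff)
  next
    case 2
    have "measure \<eta> {z} \<le> measure \<eta> (UNIV - A)"
      using z(2) 2 unfolding a_def by (intro E.finite_measure_mono) auto
    then show ?thesis
      using 2 z(2) q E.prob_compl[of A] by (intro tilt[of q 1 "1 - q" z]) (auto simp: a_def d2_eq ln_div measure_le_0_iff)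
  next
    case 3
    obtain z0 where "measure \<eta> {z0} = 0"
      using exists_measure_singleton_eq_0[OF E] .
    then show ?thesis
      using 3 q by (intro tilt[of "q / a" "(1 - q) / (1 - a)" 0 z0]) (auto simp: d2_eq ln_div field_simps)
  qed
qed

lemma d2_le_KLinf_L:
  assumes p: "0 < p" "p < 1" and E: "prob_real \<eta>"
  shows "ereal (d2 (min (measure \<eta> {..y}) p) p) \<le> KLinf_L p \<eta> y"
  unfolding KLinf_L_def
proof (rule Inf_greatest, clarify)
  fix \<kappa> assume K: "prob_real \<kappa>" and "VaR p \<kappa> \<le> y"
  then have "p \<le> measure \<kappa> {..y}"
    using VaR_le_iff[OF K p] unfolding cdf_of_def by simp
  then show "ereal (d2 (min (measure \<eta> {..y}) p) p) \<le> KL \<eta> \<kappa>"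
    using KL_nonneg[OF E K] d2_le_KL[OF E K _ p, of "{..y}"]
    by (cases "p \<le> measure \<eta> {..y}") (auto simp: min_def mult_nonneg_nonpos zero_ereal_def)
qed

lemma KLinf_L_le_d2:
  assumes p: "0 < p" "p < 1" and E: "prob_real \<eta>"
  shows "KLinf_L p \<eta> y \<le> ereal (d2 (min (measure \<eta> {..y}) p) p)"
proof -
  have feasible: "KLinf_L p \<eta> y \<le> KL \<eta> \<kappa>" if "prob_real \<kappa>" "p \<le> measure \<kappa> {..y}" for \<kappa>
    using that VaR_le_iff[OF that(1) p] unfolding KLinf_L_def cdf_of_def by (blast intro: Inf_lower)
  show ?thesis
  proof (cases "p \<le> measure \<eta> {..y}")
    case True
    then show ?thesis
      using feasible[OF E] KL_self[OF E] by (simp add: zero_ereal_def)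
  next
    case False
    obtain \<kappa> where "prob_real \<kappa>" "KL \<eta> \<kappa> = ereal (d2 (measure \<eta> {..y}) p)" "measure \<kappa> {..y} = p"
      by (rule exists_KL_eq_d2[OF E _ p, of "{..y}" y]) (use False p in auto)
    then show ?thesis
      using False feasible by fastforce
  qed
qed

lemma measure_lessThan_le_if_le_VaR:
  assumes K: "prob_real \<kappa>" and p: "0 < p" "p < 1" and "y \<le> VaR p \<kappa>"
  shows "measure \<kappa> {..<y} \<le> p"
proof -
  interpret K: real_distribution \<kappa> using real_distribution_if_prob_real[OF K] .
  have "eventually (\<lambda>t. cdf \<kappa> t \<le> p) (at_left y)"
    unfolding eventually_at_left_field using le_VaR_iff[OF K p] assms(4)
    by (intro exI[of _ "y - 1"]) (simp add: cdf_of_eq_cdf[OF K] less_imp_le)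
  then show ?thesis
    by (rule tendsto_upperbound[OF K.cdf_at_left]) simp
qed

lemma d2_le_KLinf_U:
  assumes p: "0 < p" "p < 1" and E: "prob_real \<eta>"
  shows "ereal (d2 (max (measure \<eta> {..<y}) p) p) \<le> KLinf_U p \<eta> y"
  unfolding KLinf_U_def
proof (rule Inf_greatest, clarify)
  fix \<kappa> assume K: "prob_real \<kappa>" and "y \<le> VaR p \<kappa>"
  then have "measure \<kappa> {..<y} \<le> p"
    using measure_lessThan_le_if_le_VaR p by blast
  then show "ereal (d2 (max (measure \<eta> {..<y}) p) p) \<le> KL \<eta> \<kappa>"
    using KL_nonneg[OF E K] d2_le_KL[OF E K _ p, of "{..<y}"]
    by (cases "measure \<eta> {..<y} \<le> p") (auto simp: max_def mult_nonpos_nonneg zero_ereal_def)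
qed

lemma KLinf_U_le_d2:
  assumes p: "0 < p" "p < 1" and E: "prob_real \<eta>"
  shows "KLinf_U p \<eta> y \<le> ereal (d2 (max (measure \<eta> {..<y}) p) p)"
proof -
  interpret E: real_distribution \<eta> using real_distribution_if_prob_real[OF E] .
  define a where "a = measure \<eta> {..<y}"
  have feasible: "KLinf_U p \<eta> y \<le> KL \<eta> \<kappa>" if "prob_real \<kappa>" "\<forall>t<y. measure \<kappa> {..t} < p" for \<kappa>
    using that le_VaR_iff[OF that(1) p] unfolding KLinf_U_def cdf_of_def by (blast intro: Inf_lower)
  show ?thesis
  proof (cases "a < p")
    case True
    have "measure \<eta> {..t} < p" if "t < y" for t
    proof -
      have "measure \<eta> {..t} \<le> a"
        unfolding a_def using that by (intro E.finite_measure_mono) auto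
      then show ?thesis using True by simp
    qed
    then show ?thesis
      using True feasible[OF E] KL_self[OF E] unfolding a_def by (simp add: zero_ereal_def)
  next
    case False
    \<comment> \<open>the infimum need not be attained: approach it by \<kappa> {..<y} = q with q < p\<close>
    have "KLinf_U p \<eta> y \<le> ereal (d2 a q)" if q: "0 < q" "q < p" for q
    proof -
      obtain \<kappa> where K: "prob_real \<kappa>" and KL: "KL \<eta> \<kappa> = ereal (d2 (measure \<eta> {..<y}) q)"
        and "measure \<kappa> {..<y} = q"
        and below: "\<And>S. S \<in> sets borel \<Longrightarrow> S \<subseteq> {..<y} \<Longrightarrow> y \<notin> S \<Longrightarrow> measure \<kappa> S \<le> q"
        by (rule exists_KL_eq_d2[OF E, of "{..<y}" q y]) (use False p q in \<open>auto simp: a_def\<close>)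
      have "measure \<kappa> {..t} < p" if "t < y" for t
        using below[of "{..t}"] that q by fastforce
      then show ?thesis
        using feasible[OF K] KL unfolding a_def by simp
    qed
    then have ev: "eventually (\<lambda>q. KLinf_U p \<eta> y \<le> ereal (d2 a q)) (at_left p)"
      unfolding eventually_at_left_field using p by (intro exI[of _ 0]) simp
    have lim: "((\<lambda>q. ereal (d2 a q)) \<longlongrightarrow> ereal (d2 a p)) (at_left p)"
      using isCont_d2[OF p] by (intro tendsto_ereal) (simp add: isCont_def filterlim_at_split)
    show ?thesis
      using False tendsto_le[OF trivial_limit_at_left_real lim tendsto_const ev] by (simp add: a_def)
  qed
qed

theorem lemma5:
  fixes p y :: real and \<eta> :: "real measure"
  assumes "0 < p" "p < 1" and "prob_real \<eta>"
  shows "KLinf_L p \<eta> y = ereal (d2 (min (cdf_of \<eta> y) p) p)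
       \<and> KLinf_U p \<eta> y = ereal (d2 (max (cdf_left \<eta> y) p) p)"
  using d2_le_KLinf_L[OF assms] KLinf_L_le_d2[OF assms] d2_le_KLinf_U[OF assms] KLinf_U_le_d2[OF assms]
  unfolding cdf_of_def cdf_left_eq_measure_lessThan[OF assms(3)] by (blast intro: antisym)

end
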